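(* Let $a>0$ and for $j\ge0$ put $$g_j=\Big(\frac a2\Big)^j\frac{(2j)!}{2^j\,j!\,j!}.$$ Then for every $j\ge5$, $$g_j\ \ge\ \frac1j\sum_{k=1}^{\lfloor (j-1)/2\rfloor}\ \sum_{j_1+\dots+j_k=j-k-1}\Big(\frac a2\Big)^{k+1}\frac{(k+1)(k+2)}{2}\prod_{p=1}^k\frac{g_{j_p}}{j_p+1},$$ where the inner sum is over ordered $k$-tuples $(j_1,\dots,j_k)$ of positive integers with $j_1+\dots+j_k=j-k-1$.
   Context: Here $\lfloor\cdot\rfloor$ denotes the integer part. Equivalently $g_j=(a/2)^j\frac{1\cdot3\cdots(2j-1)}{j!}$, the Taylor coefficients of $(1-at)^{-1/2}=\sum_{j\ge0}g_jt^j$. *)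

theory Defs
  imports "HOL-Analysis.Analysis"
begin

definition g :: "real \<Rightarrow> nat \<Rightarrow> real" where
  "g a j = (a/2)^j * fact (2*j) / (2^j * fact j * fact j)"

definition compositions :: "nat \<Rightarrow> nat \<Rightarrow> (nat \<Rightarrow> nat) set" where
  "compositions k n = {js \<in> {1..k} \<rightarrow>\<^sub>E {1..n}. (\<Sum>p=1..k. js p) = n}"

end

theory Submission
  imports Defs
begin

text \<open>
  Write g a m = a^m c_m with c_m = (2m choose m)/4^m. Every summand then equals
  a^j (k+1)(k+2)/2^(k+2) times a product of the weights w_m = c_m/(m+1), which are at most 1/4
  and telescope, w_m = 2 c_m - 2 c_(m+1), so that their sum over m \<ge> 1 is at most 1.
  Peeling off the first part of a composition bounds the inner sum by 1/4, and
  \<Sum>k (k+1)(k+2)/2^k \<le> 14, so the double sum is at most (7/8) a^j.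
  Finally j c_j increases with j and already exceeds 7/8 at j = 4.
\<close>

definition central_prob :: "nat \<Rightarrow> real" where
  "central_prob m = real (2*m choose m) / 4^m"

lemma central_prob_fact: "central_prob m = fact (2*m) / (fact m * fact m * 4^m)"
  unfolding central_prob_def by (simp add: binomial_fact mult_2)

lemma g_eq_central_prob: "g a m = a^m * central_prob m"
  unfolding g_def central_prob_fact
  by (simp add: power_divide power_mult_distrib[symmetric] field_simps)

lemma central_prob_pos: "central_prob m > 0"
  unfolding central_prob_fact by simp

lemma central_prob_Suc: "central_prob (Suc m) = central_prob m * (2*m+1) / (2*m+2)"
proof -
  have "fact (2 * Suc m) = (real (2*m+2) * (2*m+1)) * (fact (2*m) :: real)"
    by (simp add: algebra_simps)
  then show ?thesis
    unfolding central_prob_fact by (simp add: divide_simps) (simp add: algebra_simps)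
qed

lemma central_prob_le_half: "1 \<le> m \<Longrightarrow> central_prob m \<le> 1/2"
proof (induction m rule: nat_induct_at_least)
  case base
  then show ?case by (simp add: central_prob_def)
next
  case (Suc m)
  have "central_prob (Suc m) \<le> central_prob m"
    unfolding central_prob_Suc using central_prob_pos[of m] by (simp add: field_simps)
  with Suc show ?case by simp
qed

text \<open>The m-th Catalan number divided by 4^m.\<close>
definition catalan_weight :: "nat \<Rightarrow> real" where
  "catalan_weight m = central_prob m / (m+1)"

lemma catalan_weight_nonneg: "0 \<le> catalan_weight m"
  unfolding catalan_weight_def using central_prob_pos[of m] by simp

lemma catalan_weight_le: "1 \<le> m \<Longrightarrow> catalan_weight m \<le> 1/4"
  unfolding catalan_weight_def using central_prob_le_half[of m] central_prob_pos[of m]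
  by (simp add: field_simps)

lemma sum_catalan_weight: "(\<Sum>m=1..N. catalan_weight m) = 1 - 2 * central_prob (N+1)"
proof (induction N)
  case 0
  then show ?case by (simp add: central_prob_def)
next
  case (Suc N)
  have "catalan_weight (N+1) = 2 * central_prob (N+1) - 2 * central_prob (N+2)"
    unfolding catalan_weight_def using central_prob_Suc[of "N+1"] by (simp add: field_simps)
  with Suc show ?case by simp
qed

lemma sum_catalan_weight_le: "(\<Sum>m=1..N. catalan_weight m) \<le> 1"
  using sum_catalan_weight[of N] central_prob_pos[of "N+1"] by simp

lemma mult_central_prob_mono: "real m * central_prob m \<le> real (Suc m) * central_prob (Suc m)"
  unfolding central_prob_Suc using central_prob_pos[of m] by (simp add: field_simps)

lemma mult_central_prob_ge: "4 \<le> j \<Longrightarrow> 7/8 \<le> real j * central_prob j"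
proof (induction j rule: nat_induct_at_least)
  case base
  then show ?case by (simp add: central_prob_fact fact_numeral)
next
  case (Suc n)
  then show ?case using mult_central_prob_mono[of n] by linarith
qed

lemma sum_quadratic_div_pow2:
  "(\<Sum>k=1..M. real ((k+1)*(k+2)) / 2^k) = 14 - real (M^2 + 7*M + 14) / 2^M"
  by (induction M) (simp_all add: field_simps power2_eq_square)

lemma compositions_subset_PiE: "compositions k n \<subseteq> {1..k} \<rightarrow>\<^sub>E {1..n}"
  unfolding compositions_def by auto

lemma inj_on_restrict_compositions:
  assumes "1 \<le> k"
  shows "inj_on (\<lambda>js. restrict js {2..k}) (compositions k n)"
proof (rule inj_onI)
  fix x y
  assume x: "x \<in> compositions k n" and y: "y \<in> compositions k n"
    and eq: "restrict x {2..k} = restrict y {2..k}"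
  have tail: "x p = y p" if "p \<in> {2..k}" for p
    using fun_cong[OF eq, of p] that by simp
  have "x 1 + (\<Sum>p=2..k. x p) = y 1 + (\<Sum>p=2..k. y p)"
    using x y assms unfolding compositions_def by (simp add: sum.atLeast_Suc_atMost numeral_2_eq_2)
  moreover have "(\<Sum>p=2..k. x p) = (\<Sum>p=2..k. y p)"
    using tail by (rule sum.cong[OF refl])
  ultimately have "x 1 = y 1" by simp
  have "x p = y p" if "p \<in> {1..k}" for p
  proof (cases "p = 1")
    case True
    with \<open>x 1 = y 1\<close> show ?thesis by simp
  next
    case False
    with that tail show ?thesis by simp
  qed
  moreover have "x \<in> {1..k} \<rightarrow>\<^sub>E {1..n}" "y \<in> {1..k} \<rightarrow>\<^sub>E {1..n}"
    using x y compositions_subset_PiE by auto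
  ultimately show "x = y" by (metis PiE_ext)
qed

lemma sum_prod_compositions_le:
  fixes w :: "nat \<Rightarrow> real"
  assumes k: "1 \<le> k" and "0 \<le> B"
    and w_nonneg: "\<And>m. m \<in> {1..n} \<Longrightarrow> 0 \<le> w m"
    and w_le: "\<And>m. m \<in> {1..n} \<Longrightarrow> w m \<le> B"
  shows "(\<Sum>js\<in>compositions k n. \<Prod>p=1..k. w (js p)) \<le> B * (\<Sum>m=1..n. w m) ^ (k-1)"
proof -
  let ?C = "compositions k n" and ?tail = "\<lambda>js. restrict js {2..k}"
  have "(\<Prod>p=1..k. w (js p)) \<le> B * (\<Prod>p=2..k. w (?tail js p))" if "js \<in> ?C" for js
  proof -
    have range: "js p \<in> {1..n}" if "p \<in> {1..k}" for p
      using \<open>js \<in> ?C\<close> compositions_subset_PiE that by blast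
    have "w (js 1) * (\<Prod>p=2..k. w (js p)) \<le> B * (\<Prod>p=2..k. w (js p))"
      using k range by (intro mult_right_mono w_le prod_nonneg w_nonneg) auto
    then show ?thesis
      using k by (simp add: prod.atLeast_Suc_atMost numeral_2_eq_2)
  qed
  then have "(\<Sum>js\<in>?C. \<Prod>p=1..k. w (js p)) \<le> B * (\<Sum>js\<in>?C. \<Prod>p=2..k. w (?tail js p))"
    by (simp add: sum_mono sum_distrib_left)
  also have "(\<Sum>js\<in>?C. \<Prod>p=2..k. w (?tail js p)) = (\<Sum>h\<in>?tail ` ?C. \<Prod>p=2..k. w (h p))"
    unfolding sum.reindex[OF inj_on_restrict_compositions[OF k]] comp_def ..
  also have "\<dots> \<le> (\<Sum>h\<in>{2..k} \<rightarrow>\<^sub>E {1..n}. \<Prod>p=2..k. w (h p))"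
  proof (rule sum_mono2)
    show "?tail ` ?C \<subseteq> {2..k} \<rightarrow>\<^sub>E {1..n}"
      using compositions_subset_PiE by (fastforce simp: PiE_iff)
  qed (auto simp: finite_PiE PiE_iff intro!: prod_nonneg w_nonneg)
  also have "\<dots> = (\<Prod>p=2..k. \<Sum>m=1..n. w m)"
    by (rule prod_sum_PiE[symmetric]) auto
  also have "\<dots> = (\<Sum>m=1..n. w m) ^ (k-1)"
    by simp
  finally show ?thesis using \<open>0 \<le> B\<close> by (simp add: mult_left_mono)
qed

lemma g_div_Suc: "g a m / real (m+1) = a^m * catalan_weight m"
  by (simp add: g_eq_central_prob catalan_weight_def)

lemma summand_eq:
  assumes "js \<in> compositions k (j-k-1)" and "k + 1 \<le> j"
  shows "(a/2)^(k+1) * (real ((k+1)*(k+2)) / 2) * (\<Prod>p=1..k. g a (js p) / real (js p + 1))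
    = a^j / 4 * (real ((k+1)*(k+2)) / 2^k) * (\<Prod>p=1..k. catalan_weight (js p))"
proof -
  have "(\<Prod>p=1..k. g a (js p) / real (js p + 1)) = (\<Prod>p=1..k. a^(js p) * catalan_weight (js p))"
    by (rule prod.cong[OF refl]) (rule g_div_Suc)
  also have "\<dots> = a^(\<Sum>p=1..k. js p) * (\<Prod>p=1..k. catalan_weight (js p))"
    by (simp add: prod.distrib power_sum)
  also have "(\<Sum>p=1..k. js p) = j-k-1"
    using assms(1) unfolding compositions_def by auto
  finally have "(\<Prod>p=1..k. g a (js p) / real (js p + 1))
      = a^(j-k-1) * (\<Prod>p=1..k. catalan_weight (js p))" .
  moreover have "a^j = a^(k+1) * a^(j-k-1)"
    using assms(2) by (metis add_diff_inverse_nat diff_diff_left not_less power_add)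
  ultimately show ?thesis
    by (simp add: power_divide field_simps)
qed

lemma sum_compositions_summand_le:
  assumes "0 \<le> a" and "1 \<le> k" and "k + 1 \<le> j"
  shows "(\<Sum>js\<in>compositions k (j-k-1).
      (a/2)^(k+1) * (real ((k+1)*(k+2)) / 2) * (\<Prod>p=1..k. g a (js p) / real (js p + 1)))
    \<le> a^j / 16 * (real ((k+1)*(k+2)) / 2^k)"
proof -
  let ?C = "compositions k (j-k-1)" and ?c = "a^j / 4 * (real ((k+1)*(k+2)) / 2^k)"
  have "(\<Sum>js\<in>?C. \<Prod>p=1..k. catalan_weight (js p))
      \<le> 1/4 * (\<Sum>m=1..j-k-1. catalan_weight m) ^ (k-1)"
    using assms(2) catalan_weight_nonneg catalan_weight_le
    by (intro sum_prod_compositions_le) auto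
  also have "\<dots> \<le> 1/4"
    using sum_catalan_weight_le catalan_weight_nonneg
    by (simp add: power_le_one sum_nonneg)
  finally have weights: "(\<Sum>js\<in>?C. \<Prod>p=1..k. catalan_weight (js p)) \<le> 1/4" .
  have "(\<Sum>js\<in>?C.
      (a/2)^(k+1) * (real ((k+1)*(k+2)) / 2) * (\<Prod>p=1..k. g a (js p) / real (js p + 1)))
      = (\<Sum>js\<in>?C. ?c * (\<Prod>p=1..k. catalan_weight (js p)))"
    by (rule sum.cong[OF refl]) (rule summand_eq[OF _ assms(3)])
  also have "\<dots> = ?c * (\<Sum>js\<in>?C. \<Prod>p=1..k. catalan_weight (js p))"
    by (simp add: sum_distrib_left)
  also have "\<dots> \<le> ?c * (1/4)"
    using weights assms(1) by (intro mult_left_mono) auto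
  finally show ?thesis by simp
qed

theorem mainTheorem7:
  fixes a :: real and j :: nat
  assumes "a > 0" and "j \<ge> 5"
  shows "g a j \<ge> (1 / real j) *
    (\<Sum>k=1..(j-1) div 2. \<Sum>js\<in>compositions k (j-k-1).
        (a/2)^(k+1) * (real ((k+1)*(k+2)) / 2) *
        (\<Prod>p=1..k. g a (js p) / real (js p + 1)))"
    (is "_ \<ge> _ * (\<Sum>k=1..?M. ?S k)")
proof -
  have "(\<Sum>k=1..?M. ?S k) \<le> (\<Sum>k=1..?M. a^j / 16 * (real ((k+1)*(k+2)) / 2^k))"
    using assms by (intro sum_mono sum_compositions_summand_le) auto
  also have "\<dots> = a^j / 16 * (\<Sum>k=1..?M. real ((k+1)*(k+2)) / 2^k)"
    by (simp add: sum_distrib_left)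
  also have "\<dots> \<le> a^j / 16 * 14"
    using sum_quadratic_div_pow2[of ?M] assms(1) by (intro mult_left_mono) auto
  also have "\<dots> = a^j * (7/8)"
    by simp
  also have "\<dots> \<le> a^j * (real j * central_prob j)"
    using mult_central_prob_ge[of j] assms by (intro mult_left_mono) auto
  finally show ?thesis
    using assms by (simp add: g_eq_central_prob field_simps)
qed

end
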